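(* For integers $m\geq 1$ and $n\geq 2$, let $T_n$ be any tree with $n$ vertices and let $\overline{K_m}$ be the edgeless graph on $m$ vertices. Then $m+1\leq \chi_L(T_n\odot \overline{K_m})\leq \chi_L(T_n)+m$.
   Context: All graphs are finite and simple. A $k$-coloring of a connected graph $G$ is a map $c:V(G)\to\{1,\dots,k\}$ with $c(u)\neq c(v)$ for adjacent $u,v$; it induces the partition $\Pi=\{C_1,\dots,C_k\}$ into color classes $C_i=c^{-1}(i)$. The color code of $v$ is $c_\Pi(v)=(d(v,C_1),\dots,d(v,C_k))$ with $d(v,C_i)=\min\{d(v,x): x\in C_i\}$ (graph distance). $c$ is a locating coloring if distinct vertices have distinct color codes; the locating-chromatic number $\chi_L(G)$ is the least $k$ for which a locating $k$-coloring exists. The corona product $G\odot H$ of a graph $G$ with vertex set $\{a_1,\dots,a_n\}$ and a graph $H$ is obtained from one copy of $G$ and $n$ disjoint copies of $H$ by joining $a_i$ to every vertex of the $i$-th copy of $H$. *)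

theory Defs
  imports Main "HOL-Library.Extended_Nat"
begin

definition simple_graph :: "'a set \<Rightarrow> ('a \<Rightarrow> 'a \<Rightarrow> bool) \<Rightarrow> bool" where
  "simple_graph V E \<longleftrightarrow> finite V \<and> (\<forall>u v. E u v \<longrightarrow> E v u) \<and> (\<forall>u. \<not> E u u)
     \<and> (\<forall>u v. E u v \<longrightarrow> u \<in> V \<and> v \<in> V)"

definition is_walk :: "'a set \<Rightarrow> ('a \<Rightarrow> 'a \<Rightarrow> bool) \<Rightarrow> 'a list \<Rightarrow> bool" where
  "is_walk V E xs \<longleftrightarrow> xs \<noteq> [] \<and> set xs \<subseteq> V \<and> (\<forall>i. Suc i < length xs \<longrightarrow> E (xs ! i) (xs ! Suc i))"

definition connected_graph :: "'a set \<Rightarrow> ('a \<Rightarrow> 'a \<Rightarrow> bool) \<Rightarrow> bool" where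
  "connected_graph V E \<longleftrightarrow> V \<noteq> {} \<and>
     (\<forall>u\<in>V. \<forall>v\<in>V. \<exists>xs. is_walk V E xs \<and> hd xs = u \<and> last xs = v)"

definition is_cycle :: "'a set \<Rightarrow> ('a \<Rightarrow> 'a \<Rightarrow> bool) \<Rightarrow> 'a list \<Rightarrow> bool" where
  "is_cycle V E xs \<longleftrightarrow> is_walk V E xs \<and> distinct xs \<and> length xs \<ge> 3 \<and> E (last xs) (hd xs)"

definition is_tree :: "'a set \<Rightarrow> ('a \<Rightarrow> 'a \<Rightarrow> bool) \<Rightarrow> bool" where
  "is_tree V E \<longleftrightarrow> simple_graph V E \<and> connected_graph V E \<and> (\<nexists>xs. is_cycle V E xs)"

text \<open>Graph distance (infinite if no walk exists).\<close>
definition gdist :: "'a set \<Rightarrow> ('a \<Rightarrow> 'a \<Rightarrow> bool) \<Rightarrow> 'a \<Rightarrow> 'a \<Rightarrow> enat" where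
  "gdist V E u v = (INF xs \<in> {xs. is_walk V E xs \<and> hd xs = u \<and> last xs = v}. enat (length xs - 1))"

definition setdist :: "'a set \<Rightarrow> ('a \<Rightarrow> 'a \<Rightarrow> bool) \<Rightarrow> 'a \<Rightarrow> 'a set \<Rightarrow> enat" where
  "setdist V E v C = (INF x \<in> C. gdist V E v x)"

definition color_class :: "'a set \<Rightarrow> ('a \<Rightarrow> nat) \<Rightarrow> nat \<Rightarrow> 'a set" where
  "color_class V c i = {x \<in> V. c x = i}"

definition proper_coloring :: "'a set \<Rightarrow> ('a \<Rightarrow> 'a \<Rightarrow> bool) \<Rightarrow> nat \<Rightarrow> ('a \<Rightarrow> nat) \<Rightarrow> bool" where
  "proper_coloring V E k c \<longleftrightarrow> (\<forall>v\<in>V. c v \<in> {1..k}) \<and> (\<forall>u\<in>V. \<forall>v\<in>V. E u v \<longrightarrow> c u \<noteq> c v)"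

definition color_code :: "'a set \<Rightarrow> ('a \<Rightarrow> 'a \<Rightarrow> bool) \<Rightarrow> nat \<Rightarrow> ('a \<Rightarrow> nat) \<Rightarrow> 'a \<Rightarrow> enat list" where
  "color_code V E k c v = map (\<lambda>i. setdist V E v (color_class V c i)) [1..<Suc k]"

definition locating_coloring :: "'a set \<Rightarrow> ('a \<Rightarrow> 'a \<Rightarrow> bool) \<Rightarrow> nat \<Rightarrow> ('a \<Rightarrow> nat) \<Rightarrow> bool" where
  "locating_coloring V E k c \<longleftrightarrow> proper_coloring V E k c \<and>
     (\<forall>u\<in>V. \<forall>v\<in>V. u \<noteq> v \<longrightarrow> color_code V E k c u \<noteq> color_code V E k c v)"

definition locating_chromatic_number :: "'a set \<Rightarrow> ('a \<Rightarrow> 'a \<Rightarrow> bool) \<Rightarrow> nat" where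
  "locating_chromatic_number V E = (LEAST k. \<exists>c. locating_coloring V E k c)"

text \<open>Corona product G \<odot> H: vertex Inl a is the copy of a in G, Inr (a,b) is vertex b
  of the copy of H attached to a.\<close>
definition corona_V :: "'a set \<Rightarrow> 'b set \<Rightarrow> ('a + 'a \<times> 'b) set" where
  "corona_V V W = Inl ` V \<union> Inr ` (V \<times> W)"

fun corona_E :: "('a \<Rightarrow> 'a \<Rightarrow> bool) \<Rightarrow> 'a set \<Rightarrow> ('b \<Rightarrow> 'b \<Rightarrow> bool) \<Rightarrow> 'b set
    \<Rightarrow> ('a + 'a \<times> 'b) \<Rightarrow> ('a + 'a \<times> 'b) \<Rightarrow> bool" where
  "corona_E E V F W (Inl a) (Inl a') = E a a'"
| "corona_E E V F W (Inr (a, b)) (Inr (a', b')) = (a = a' \<and> a \<in> V \<and> F b b')"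
| "corona_E E V F W (Inl a) (Inr (a', b)) = (a = a' \<and> a \<in> V \<and> b \<in> W)"
| "corona_E E V F W (Inr (a', b)) (Inl a) = (a = a' \<and> a \<in> V \<and> b \<in> W)"

definition edgeless_V :: "nat \<Rightarrow> nat set" where
  "edgeless_V m = {..<m}"

definition edgeless_E :: "nat \<Rightarrow> nat \<Rightarrow> bool" where
  "edgeless_E u v = False"

end

theory Submission
  imports Defs
begin

text \<open>Lower bound: a vertex \<open>a\<close> of \<open>T\<close> and its \<open>m\<close> pendant leaves need \<open>m + 1\<close>
  distinct colours, since \<open>a\<close> is adjacent to every leaf, and two leaves of \<open>a\<close> with the same
  colour are twins, so they have the same colour code.

  Upper bound: extend a locating \<open>k\<close>-colouring \<open>c\<close> of \<open>T\<close> by giving the \<open>j\<close>-th leaf of every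
  vertex the new colour \<open>k + 1 + j\<close>. The old classes stay inside \<open>T\<close> and a leaf is one step
  further from each of them than its root, so the colour (which tells whether a vertex is a leaf,
  and which one) together with the first \<open>k\<close> entries of the code recovers the root's code under
  \<open>c\<close>, hence the root, hence the vertex.\<close>

lemma INF_enat_add_left:
  fixes c :: enat
  shows "(INF x\<in>A. c + f x) = c + (INF x\<in>A. f x)"
proof (cases "A = {}")
  case True
  then show ?thesis by (simp add: top_enat_def)
next
  case False
  then obtain x0 where x0: "x0 \<in> A" "f x0 = (INF x\<in>A. f x)"
    using wellorder_InfI[of _ "f ` A"] by fastforce
  show ?thesis
  proof (rule antisym)
    show "(INF x\<in>A. c + f x) \<le> c + (INF x\<in>A. f x)"
      using INF_lower[OF x0(1), of "\<lambda>x. c + f x"] x0(2) by simp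
    show "c + (INF x\<in>A. f x) \<le> (INF x\<in>A. c + f x)"
      by (rule INF_greatest) (intro add_left_mono INF_lower)
  qed
qed

lemma is_walk_Cons:
  "is_walk V E (x # ys) \<longleftrightarrow> x \<in> V \<and> (ys = [] \<or> E x (hd ys) \<and> is_walk V E ys)"
  by (cases ys) (auto simp: is_walk_def nth_Cons split: nat.splits)

lemma gdist_refl: "v \<in> V \<Longrightarrow> gdist V E v v = 0"
proof -
  assume "v \<in> V"
  then have "gdist V E v v \<le> enat (length [v] - 1)"
    unfolding gdist_def by (intro INF_lower) (simp add: is_walk_def)
  then show ?thesis by (simp add: zero_enat_def[symmetric])
qed

lemma gdist_eq_0_imp_eq:
  assumes "gdist V E u x = 0" shows "u = x"
proof -
  let ?W = "{xs. is_walk V E xs \<and> hd xs = u \<and> last xs = x}"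
  have "?W \<noteq> {}"
    using assms unfolding gdist_def by (metis INF_empty top_enat_def infinity_ne_i0)
  then obtain xs where xs: "xs \<in> ?W" "enat (length xs - 1) = 0"
    using wellorder_InfI[of _ "(\<lambda>xs. enat (length xs - 1)) ` ?W"] assms
    unfolding gdist_def by fastforce
  then obtain y where "xs = [y]"
    by (cases xs) (auto simp: is_walk_def zero_enat_def)
  then show ?thesis using xs by auto
qed

lemma setdist_eq_0_iff:
  assumes "u \<in> V" shows "setdist V E u S = 0 \<longleftrightarrow> u \<in> S"
proof
  assume h: "setdist V E u S = 0"
  then have "S \<noteq> {}" unfolding setdist_def by (metis INF_empty top_enat_def infinity_ne_i0)
  then obtain x where "x \<in> S" "gdist V E u x = 0"
    using wellorder_InfI[of _ "gdist V E u ` S"] h unfolding setdist_def by fastforce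
  then show "u \<in> S" by (metis gdist_eq_0_imp_eq)
next
  assume "u \<in> S"
  then have "setdist V E u S \<le> gdist V E u u" unfolding setdist_def by (rule INF_lower)
  then show "setdist V E u S = 0" using gdist_refl[OF assms] by simp
qed

lemma walks_from_pendant:
  assumes nbr: "\<And>y. E l y \<longleftrightarrow> y = p" and "l \<in> V" "x \<noteq> l"
  shows "{xs. is_walk V E xs \<and> hd xs = l \<and> last xs = x}
       = Cons l ` {ys. is_walk V E ys \<and> hd ys = p \<and> last ys = x}"
proof (intro equalityI subsetI)
  fix xs assume "xs \<in> {xs. is_walk V E xs \<and> hd xs = l \<and> last xs = x}"
  then have h: "is_walk V E xs" "hd xs = l" "last xs = x" by auto
  then obtain ys where xs: "xs = l # ys" by (cases xs) (auto simp: is_walk_def)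
  have "ys \<noteq> []" using h xs \<open>x \<noteq> l\<close> by auto
  then show "xs \<in> Cons l ` {ys. is_walk V E ys \<and> hd ys = p \<and> last ys = x}"
    using h xs nbr by (auto simp: is_walk_Cons)
next
  fix xs assume "xs \<in> Cons l ` {ys. is_walk V E ys \<and> hd ys = p \<and> last ys = x}"
  then show "xs \<in> {xs. is_walk V E xs \<and> hd xs = l \<and> last xs = x}"
    using nbr \<open>l \<in> V\<close> by (auto simp: is_walk_Cons) (auto simp: is_walk_def)
qed

lemma gdist_pendant:
  assumes "\<And>y. E l y \<longleftrightarrow> y = p" and "l \<in> V" "x \<noteq> l"
  shows "gdist V E l x = 1 + gdist V E p x"
proof -
  let ?W = "{ys. is_walk V E ys \<and> hd ys = p \<and> last ys = x}"
  have "gdist V E l x = (INF ys\<in>?W. enat (length (l # ys) - 1))"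
    unfolding gdist_def walks_from_pendant[of E l p, OF assms] by (simp add: image_image)
  also have "\<dots> = (INF ys\<in>?W. 1 + enat (length ys - 1))"
    by (rule INF_cong) (auto simp: is_walk_def one_enat_def)
  also have "\<dots> = 1 + gdist V E p x"
    unfolding gdist_def by (rule INF_enat_add_left)
  finally show ?thesis .
qed

lemma setdist_pendant:
  assumes "\<And>y. E l y \<longleftrightarrow> y = p" and "l \<in> V" "l \<notin> S"
  shows "setdist V E l S = 1 + setdist V E p S"
proof -
  have "setdist V E l S = (INF x\<in>S. 1 + gdist V E p x)"
    unfolding setdist_def using assms by (intro INF_cong) (auto intro: gdist_pendant)
  then show ?thesis unfolding setdist_def by (simp add: INF_enat_add_left)
qed

lemma color_code_eq_iff:
  "color_code V E K c u = color_code V E K c v \<longleftrightarrow>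
     (\<forall>i\<in>{1..K}. setdist V E u (color_class V c i) = setdist V E v (color_class V c i))"
  unfolding color_code_def by auto

lemma color_code_eq_imp_color_eq:
  assumes "proper_coloring V E K c" "u \<in> V" "v \<in> V"
    and "color_code V E K c u = color_code V E K c v"
  shows "c u = c v"
proof -
  have "c v \<in> {1..K}" using assms(1,3) by (simp add: proper_coloring_def)
  then have "setdist V E u (color_class V c (c v)) = setdist V E v (color_class V c (c v))"
    using assms(4) by (simp add: color_code_eq_iff)
  also have "\<dots> = 0"
    using assms(3) by (simp add: setdist_eq_0_iff color_class_def)
  finally show ?thesis
    using assms(2) by (simp add: setdist_eq_0_iff color_class_def)
qed

lemma locating_coloring_exists:
  assumes "finite V" "\<And>u. \<not> E u u"
  shows "\<exists>k c. locating_coloring V E k c"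
proof -
  obtain h where h: "bij_betw h V {0..<card V}"
    using ex_bij_betw_finite_nat[OF assms(1)] by blast
  define c where "c v = Suc (h v)" for v
  have inj: "inj_on c V"
    using h unfolding c_def bij_betw_def inj_on_def by simp
  have range: "c v \<in> {1..card V}" if "v \<in> V" for v
    using bij_betwE[OF h] that unfolding c_def by fastforce
  have pc: "proper_coloring V E (card V) c"
    unfolding proper_coloring_def using range inj assms(2) by (metis inj_on_def)
  then have "locating_coloring V E (card V) c"
    unfolding locating_coloring_def
    using color_code_eq_imp_color_eq[OF pc] inj by (metis inj_on_def)
  then show ?thesis by blast
qed

lemma locating_chromatic_number_le:
  "locating_coloring V E k c \<Longrightarrow> locating_chromatic_number V E \<le> k"
  unfolding locating_chromatic_number_def by (rule Least_le) blast

lemma locating_chromatic_number_attained: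
  "locating_coloring V E k c \<Longrightarrow> \<exists>c. locating_coloring V E (locating_chromatic_number V E) c"
  unfolding locating_chromatic_number_def by (rule LeastI) blast

lemma pendant_twins_color_code_eq:
  assumes "\<And>y. E l y \<longleftrightarrow> y = p" "\<And>y. E l' y \<longleftrightarrow> y = p"
    and "l \<in> V" "l' \<in> V" "c l = c l'"
  shows "color_code V E K c l = color_code V E K c l'"
  unfolding color_code_eq_iff
proof
  fix i
  show "setdist V E l (color_class V c i) = setdist V E l' (color_class V c i)"
  proof (cases "c l = i")
    case True
    then have "setdist V E l (color_class V c i) = 0" "setdist V E l' (color_class V c i) = 0"
      using assms(3-5) by (simp_all add: setdist_eq_0_iff color_class_def)
    then show ?thesis by simp
  next
    case False
    then show ?thesis using assms by (simp add: setdist_pendant color_class_def)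
  qed
qed

definition corona_root :: "'a + 'a \<times> 'b \<Rightarrow> 'a" where
  "corona_root = case_sum id fst"

lemma corona_root_simps [simp]:
  "corona_root (Inl a) = a" "corona_root (Inr (a, b)) = a"
  by (simp_all add: corona_root_def)

lemma corona_root_mem: "x \<in> corona_V V W \<Longrightarrow> corona_root x \<in> V"
  by (auto simp: corona_V_def)

lemma corona_E_root:
  "corona_E E V F W x z \<Longrightarrow> corona_root x = corona_root z \<or> E (corona_root x) (corona_root z)"
  by (cases x; cases z) auto

lemma corona_walk_root:
  "is_walk (corona_V V W) (corona_E E V F W) xs \<Longrightarrow>
   \<exists>ys. is_walk V E ys \<and> hd ys = corona_root (hd xs) \<and> last ys = corona_root (last xs)
        \<and> length ys \<le> length xs"
proof (induction xs)
  case Nil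
  then show ?case by (simp add: is_walk_def)
next
  case (Cons x xs)
  show ?case
  proof (cases "xs = []")
    case True
    then show ?thesis using Cons.prems corona_root_mem[of x V W]
      by (intro exI[of _ "[corona_root x]"]) (auto simp: is_walk_Cons)
  next
    case False
    with Cons.prems have x: "x \<in> corona_V V W" "corona_E E V F W x (hd xs)"
      and xs: "is_walk (corona_V V W) (corona_E E V F W) xs"
      by (auto simp: is_walk_Cons)
    from Cons.IH[OF xs] obtain ys where ys: "is_walk V E ys" "hd ys = corona_root (hd xs)"
      "last ys = corona_root (last xs)" "length ys \<le> length xs" by blast
    then have "ys \<noteq> []" by (auto simp: is_walk_def)
    show ?thesis
    proof (cases "corona_root x = corona_root (hd xs)")
      case True
      then show ?thesis using ys False by (intro exI[of _ ys]) auto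
    next
      case False
      then have "E (corona_root x) (corona_root (hd xs))" using corona_E_root[OF x(2)] by blast
      then show ?thesis using ys \<open>xs \<noteq> []\<close> \<open>ys \<noteq> []\<close> corona_root_mem[OF x(1)]
        by (intro exI[of _ "corona_root x # ys"]) (auto simp: is_walk_Cons)
    qed
  qed
qed

lemma is_walk_map_Inl:
  "is_walk V E ys \<Longrightarrow> is_walk (corona_V V W) (corona_E E V F W) (map Inl ys)"
proof (induction ys)
  case (Cons y ys)
  then show ?case by (cases ys) (auto simp: is_walk_Cons corona_V_def)
qed (simp add: is_walk_def)

lemma gdist_corona_Inl:
  "gdist (corona_V V W) (corona_E E V F W) (Inl a) (Inl y) = gdist V E a y"
proof (rule antisym)
  show "gdist (corona_V V W) (corona_E E V F W) (Inl a) (Inl y) \<le> gdist V E a y"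
    unfolding gdist_def
  proof (rule INF_mono)
    fix ys assume "ys \<in> {xs. is_walk V E xs \<and> hd xs = a \<and> last xs = y}"
    then have "map Inl ys \<in> {xs. is_walk (corona_V V W) (corona_E E V F W) xs
                                 \<and> hd xs = Inl a \<and> last xs = Inl y}"
      using is_walk_map_Inl[of V E ys W F] by (auto simp: is_walk_def hd_map last_map)
    then show "\<exists>xs\<in>{xs. is_walk (corona_V V W) (corona_E E V F W) xs \<and> hd xs = Inl a \<and> last xs = Inl y}.
          enat (length xs - 1) \<le> enat (length ys - 1)"
      by force
  qed
  show "gdist V E a y \<le> gdist (corona_V V W) (corona_E E V F W) (Inl a) (Inl y)"
    unfolding gdist_def
  proof (rule INF_mono)
    fix xs
    assume "xs \<in> {xs. is_walk (corona_V V W) (corona_E E V F W) xs \<and> hd xs = Inl a \<and> last xs = Inl y}"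
    then show "\<exists>ys\<in>{xs. is_walk V E xs \<and> hd xs = a \<and> last xs = y}.
          enat (length ys - 1) \<le> enat (length xs - 1)"
      using corona_walk_root[of V W E F xs] by force
  qed
qed

lemma setdist_corona_Inl:
  "setdist (corona_V V W) (corona_E E V F W) (Inl a) (Inl ` C) = setdist V E a C"
  unfolding setdist_def by (simp add: image_image gdist_corona_Inl)

lemma corona_E_pendant:
  assumes "a \<in> V" "b \<in> W" "\<And>x y. \<not> F x y"
  shows "corona_E E V F W (Inr (a, b)) y \<longleftrightarrow> y = Inl a"
  using assms by (cases y) auto

lemma locating_coloring_corona_card_le:
  assumes loc: "locating_coloring (corona_V V W) (corona_E E V F W) K c"
    and "a \<in> V" "finite W" "\<And>x y. \<not> F x y"
  shows "card W + 1 \<le> K"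
proof -
  let ?CV = "corona_V V W" and ?CE = "corona_E E V F W"
  have pc: "proper_coloring ?CV ?CE K c" using loc by (simp add: locating_coloring_def)
  have mem: "Inl a \<in> ?CV" "\<And>b. b \<in> W \<Longrightarrow> Inr (a, b) \<in> ?CV"
    using \<open>a \<in> V\<close> by (auto simp: corona_V_def)
  have inj: "inj_on (\<lambda>b. c (Inr (a, b))) W"
  proof (rule inj_onI, rule ccontr)
    fix b b' assume "b \<in> W" "b' \<in> W" "c (Inr (a, b)) = c (Inr (a, b'))" "b \<noteq> b'"
    then have "color_code ?CV ?CE K c (Inr (a, b)) = color_code ?CV ?CE K c (Inr (a, b'))"
      using assms(2,4) mem by (intro pendant_twins_color_code_eq[where p = "Inl a"] corona_E_pendant)
    then show False
      using loc mem \<open>b \<in> W\<close> \<open>b' \<in> W\<close> \<open>b \<noteq> b'\<close> by (auto simp: locating_coloring_def)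
  qed
  have "c (Inl a) \<notin> (\<lambda>b. c (Inr (a, b))) ` W"
    using pc mem \<open>a \<in> V\<close> by (auto simp: proper_coloring_def)
  then have "card (insert (c (Inl a)) ((\<lambda>b. c (Inr (a, b))) ` W)) = card W + 1"
    using card_image[OF inj] \<open>finite W\<close> by simp
  moreover have "insert (c (Inl a)) ((\<lambda>b. c (Inr (a, b))) ` W) \<subseteq> {1..K}"
    using pc mem by (auto simp: proper_coloring_def)
  ultimately show ?thesis
    by (metis card_atLeastAtMost card_mono finite_atLeastAtMost diff_Suc_1)
qed

definition corona_coloring :: "nat \<Rightarrow> ('a \<Rightarrow> nat) \<Rightarrow> 'a + 'a \<times> nat \<Rightarrow> nat" where
  "corona_coloring k c = case_sum c (\<lambda>(a, b). k + 1 + b)"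

lemma corona_coloring_simps [simp]:
  "corona_coloring k c (Inl a) = c a" "corona_coloring k c (Inr (a, b)) = k + 1 + b"
  by (simp_all add: corona_coloring_def)

context
  fixes V :: "'a set" and E :: "'a \<Rightarrow> 'a \<Rightarrow> bool" and k m :: nat and c :: "'a \<Rightarrow> nat"
  assumes proper: "proper_coloring V E k c"
begin

private abbreviation "CV \<equiv> corona_V V {..<m}"
private abbreviation "CE \<equiv> corona_E E V edgeless_E {..<m}"
private abbreviation "c' \<equiv> corona_coloring k c"

lemma corona_coloring_le_iff_isl:
  "x \<in> CV \<Longrightarrow> c' x \<le> k \<longleftrightarrow> isl x"
  using proper by (auto simp: corona_V_def proper_coloring_def)

lemma proper_coloring_corona: "proper_coloring CV CE (k + m) c'"
  using proper unfolding proper_coloring_def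
  by (auto simp: corona_V_def edgeless_E_def elim!: corona_E.elims)

lemma color_class_corona_coloring:
  "i \<in> {1..k} \<Longrightarrow> color_class CV c' i = Inl ` color_class V c i"
  using proper by (auto simp: color_class_def corona_V_def proper_coloring_def)

lemma setdist_corona_coloring:
  assumes "x \<in> CV" "i \<in> {1..k}"
  shows "setdist CV CE x (color_class CV c' i)
       = (if isl x then 0 else 1) + setdist V E (corona_root x) (color_class V c i)"
proof (cases x)
  case (Inl a)
  then show ?thesis using assms(2) by (simp add: color_class_corona_coloring setdist_corona_Inl)
next
  case (Inr p)
  then obtain a b where x: "x = Inr (a, b)" "a \<in> V" "b < m"
    using assms(1) by (auto simp: corona_V_def)
  have "x \<notin> color_class CV c' i"
    using corona_coloring_le_iff_isl[OF assms(1)] assms(2) x(1) by (auto simp: color_class_def)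
  moreover have "CE x y \<longleftrightarrow> y = Inl a" for y
    unfolding x(1) by (rule corona_E_pendant) (use x in \<open>auto simp: edgeless_E_def\<close>)
  ultimately have "setdist CV CE x (color_class CV c' i) = 1 + setdist CV CE (Inl a) (color_class CV c' i)"
    using assms(1) by (intro setdist_pendant)
  then show ?thesis
    using assms(2) x(1) by (simp add: color_class_corona_coloring setdist_corona_Inl)
qed

lemma inj_on_corona_root_coloring: "inj_on (\<lambda>x. (corona_root x, c' x)) CV"
  using proper
  by (intro inj_onI) (auto simp: corona_V_def proper_coloring_def)

lemma locating_coloring_corona:
  assumes "locating_coloring V E k c"
  shows "locating_coloring CV CE (k + m) c'"
  unfolding locating_coloring_def
proof (intro conjI proper_coloring_corona ballI impI notI)
  fix u v assume u: "u \<in> CV" and v: "v \<in> CV" and "u \<noteq> v"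
    and code: "color_code CV CE (k + m) c' u = color_code CV CE (k + m) c' v"
  have "c' u = c' v"
    using color_code_eq_imp_color_eq[OF proper_coloring_corona u v code] .
  then have "isl u = isl v"
    using corona_coloring_le_iff_isl[OF u] corona_coloring_le_iff_isl[OF v] by simp
  have "setdist V E (corona_root u) (color_class V c i) = setdist V E (corona_root v) (color_class V c i)"
    if "i \<in> {1..k}" for i
  proof -
    have "setdist CV CE u (color_class CV c' i) = setdist CV CE v (color_class CV c' i)"
      using code that by (simp add: color_code_eq_iff)
    then show ?thesis
      using \<open>isl u = isl v\<close> by (simp add: setdist_corona_coloring[OF u that]
          setdist_corona_coloring[OF v that] enat_add_left_cancel split: if_splits)
  qed
  then have "color_code V E k c (corona_root u) = color_code V E k c (corona_root v)"
    by (simp add: color_code_eq_iff)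
  then have "corona_root u = corona_root v"
    using assms corona_root_mem[OF u] corona_root_mem[OF v] by (auto simp: locating_coloring_def)
  with \<open>c' u = c' v\<close> show False
    using inj_on_corona_root_coloring u v \<open>u \<noteq> v\<close> by (auto dest: inj_onD)
qed

end

theorem theorem5:
  fixes V :: "'a set" and E :: "'a \<Rightarrow> 'a \<Rightarrow> bool" and m n :: nat
  assumes "m \<ge> 1" and "n \<ge> 2"
    and "is_tree V E" and "card V = n"
  shows "m + 1 \<le> locating_chromatic_number (corona_V V (edgeless_V m))
                    (corona_E E V edgeless_E (edgeless_V m))
       \<and> locating_chromatic_number (corona_V V (edgeless_V m))
                    (corona_E E V edgeless_E (edgeless_V m))
           \<le> locating_chromatic_number V E + m"
proof -
  let ?CV = "corona_V V {..<m}" and ?CE = "corona_E E V edgeless_E {..<m}"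
  have "finite V" "\<And>u. \<not> E u u"
    using \<open>is_tree V E\<close> by (auto simp: is_tree_def simple_graph_def)
  then obtain c where c: "locating_coloring V E (locating_chromatic_number V E) c"
    using locating_coloring_exists locating_chromatic_number_attained by metis
  then have corona_loc: "locating_coloring ?CV ?CE (locating_chromatic_number V E + m)
                           (corona_coloring (locating_chromatic_number V E) c)"
    by (intro locating_coloring_corona) (simp_all add: locating_coloring_def)
  obtain c' where "locating_coloring ?CV ?CE (locating_chromatic_number ?CV ?CE) c'"
    using locating_chromatic_number_attained[OF corona_loc] by blast
  moreover obtain a where "a \<in> V"
    using assms(2,4) by fastforce
  ultimately have "m + 1 \<le> locating_chromatic_number ?CV ?CE"
    using locating_coloring_corona_card_le[of V "{..<m}"] by (fastforce simp: edgeless_E_def)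
  then show ?thesis
    using locating_chromatic_number_le[OF corona_loc] by (simp add: edgeless_V_def)
qed

end
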